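(* Let $(x_n)$ be generated by (HPPA). Let $\gamma>0$ be real and let ${\rm a},{\rm B},{\rm E}:\mathbb{N}\to\mathbb{N}$ be monotone functions satisfying (Q1), (Q3), (Q4) respectively. Let $\mathcal{E},\mathcal{D},\ell\in\mathbb{N}$ satisfy $\mathcal{E}\geq 1+\sum_{i=0}^{{\rm E}(0)}\|e_i\|$, $\mathcal{D}\geq\|x_0-p\|$ for some $p\in S$, and $\ell\geq\gamma$. Define $\xi(k):=\max\{{\rm a}(2(2\mathcal{D}+\mathcal{E})(k+1)-1),\ {\rm E}(2k+1)+1\}$ and $$\chi_\ell(k):=\max\{\xi(4k+3),\ {\rm B}(8(\mathcal{D}+\mathcal{E})(k+1)\ell-1)\}+1.$$ Then $\forall k\in\mathbb{N}\ \forall n\geq\chi_\ell(k)\ \big(\|x_n-J_\gamma(x_n)\|\leq\frac{1}{k+1}\big)$.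
   Context: $X$ is a real Hilbert space, $\mathsf{A}:X\to 2^X$ a maximal monotone operator with zero set $S=\{x:0\in\mathsf{A}(x)\}$, assumed nonempty. For $\beta>0$, $J_\beta:=(Id+\beta\mathsf{A})^{-1}$ is the resolvent, a single-valued nonexpansive map with fixed point set $S$. Given $(\alpha_n)\subset\,]0,1[$, $(\beta_n)\subset(0,\infty)$, $(e_n)\subset X$, $x_0\in X$, (HPPA) is the sequence $x_{n+1}:=\alpha_n x_0+(1-\alpha_n)(J_{\beta_n}(x_n)+e_n)$. (Q1): $\forall k\,\forall n\geq{\rm a}(k)\ \alpha_n\leq\frac{1}{k+1}$. (Q3): $\forall k\,\forall n\geq{\rm B}(k)\ \beta_n\geq k$. (Q4): $\forall k\,\forall n\ \sum_{i={\rm E}(k)+1}^{{\rm E}(k)+n}\|e_i\|\leq\frac{1}{k+1}$. Monotone means nondecreasing. *)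

theory Defs
  imports "HOL-Analysis.Analysis"
begin

definition monotone_op :: "('a::real_inner \<Rightarrow> 'a set) \<Rightarrow> bool" where
  "monotone_op A \<longleftrightarrow> (\<forall>x y u v. u \<in> A x \<longrightarrow> v \<in> A y \<longrightarrow> inner (x - y) (u - v) \<ge> 0)"

definition maximal_monotone :: "('a::real_inner \<Rightarrow> 'a set) \<Rightarrow> bool" where
  "maximal_monotone A \<longleftrightarrow> monotone_op A \<and>
     (\<forall>B. monotone_op B \<and> (\<forall>x. A x \<subseteq> B x) \<longrightarrow> B = A)"

definition zeros :: "('a::real_inner \<Rightarrow> 'a set) \<Rightarrow> 'a set" where
  "zeros A = {x. 0 \<in> A x}"

text \<open>Resolvent J_beta = (Id + beta A)^{-1}: J_beta(x) is the (unique, for maximal monotone A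
  and beta > 0) point y with x \<in> y + beta A(y).\<close>
definition resolvent :: "('a::real_inner \<Rightarrow> 'a set) \<Rightarrow> real \<Rightarrow> 'a \<Rightarrow> 'a" where
  "resolvent A \<beta> x = (THE y. \<exists>u \<in> A y. x = y + \<beta> *\<^sub>R u)"

end

theory Submission
  imports Defs
begin

text \<open>
  For an antimonotone set of pairs \<open>(a, w)\<close>, the closed
  balls with diameter \<open>[a, w]\<close>, i.e. \<open>{x. \<langle>x - a, x - w\<rangle> \<le> 0}\<close>, have a common point.
  For finitely many balls, minimise the largest of these quadratic forms over the convex hull of the
  centres; the minimiser lies in the hull of the centres of the balls where the maximum is attained
  (otherwise moving towards that hull lowers all of them), and there a convex combination of the
  active forms is \<open>\<le> 0\<close> by antimonotonicity. For infinitely many balls, the points of almost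
  minimal norm in growing finite intersections form a Cauchy nest by the parallelogram law.
  The pairs \<open>(x, z - \<beta> v)\<close> with \<open>v \<in> A x\<close> are antimonotone, and a common point \<open>y\<close> of their
  balls satisfies \<open>z \<in> y + \<beta> A y\<close> by maximality; so the resolvent is defined everywhere.

  For the rate, let \<open>y = J\<^sub>\<beta>\<^sub>n x\<^sub>n\<close>, so that \<open>x\<^sub>n = y + \<beta>\<^sub>n v\<close> with \<open>v \<in> A y\<close>. Then
  \<open>x\<^sub>n\<^sub>+\<^sub>1 - y = \<alpha>\<^sub>n (x\<^sub>0 - y) + (1 - \<alpha>\<^sub>n) e\<^sub>n\<close> and \<open>\<parallel>y - J\<^sub>\<gamma> y\<parallel> \<le> \<gamma> \<parallel>v\<parallel> \<le> \<gamma> \<parallel>x\<^sub>n - p\<parallel> / \<beta>\<^sub>n\<close>,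
  while \<open>\<parallel>x\<^sub>n - p\<parallel> \<le> \<D> + \<E>\<close> throughout. Nonexpansiveness of \<open>J\<^sub>\<gamma>\<close> gives
  \<open>\<parallel>x\<^sub>n\<^sub>+\<^sub>1 - J\<^sub>\<gamma> x\<^sub>n\<^sub>+\<^sub>1\<parallel> \<le> 2 \<parallel>x\<^sub>n\<^sub>+\<^sub>1 - y\<parallel> + \<parallel>y - J\<^sub>\<gamma> y\<parallel>\<close>, and \<open>\<chi>\<^sub>\<ell>(k)\<close> is chosen so that each
  of the three contributions is at most \<open>1/(4(k+1))\<close>.
\<close>

section \<open>Balls with antimonotone diameters\<close>

definition antimonotone_pairs :: "('a::real_inner \<times> 'a) set \<Rightarrow> bool" where
  "antimonotone_pairs P \<longleftrightarrow> (\<forall>p\<in>P. \<forall>q\<in>P. inner (fst p - fst q) (snd p - snd q) \<le> 0)"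

definition diameter_ball :: "'a::real_inner \<times> 'a \<Rightarrow> 'a set" where
  "diameter_ball p = {x. inner (x - fst p) (x - snd p) \<le> 0}"

lemma inner_diff_diff_eq_midpoint:
  fixes x a w :: "'a::real_inner"
  shows "inner (x - a) (x - w) = (norm (x - midpoint a w))\<^sup>2 - (dist a w / 2)\<^sup>2"
  unfolding midpoint_def dist_norm power2_norm_eq_inner power_divide
  by (simp add: inner_diff_left inner_diff_right inner_add_left inner_add_right
      algebra_simps inner_commute) (simp add: field_simps)

lemma inner_diff_diff_add_scaleR:
  fixes x h a w :: "'a::real_inner"
  shows "inner (x + t *\<^sub>R h - a) (x + t *\<^sub>R h - w) =
    inner (x - a) (x - w) - 2 * t * inner (midpoint a w - x) h + t\<^sup>2 * (norm h)\<^sup>2"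
proof -
  have "inner (x + t *\<^sub>R h - a) (x + t *\<^sub>R h - w) =
    inner (x - a) (x - w) + 2 * t * inner (x - (1/2) *\<^sub>R (a + w)) h + t\<^sup>2 * (norm h)\<^sup>2"
    unfolding power2_norm_eq_inner
    by (simp add: inner_diff_left inner_diff_right inner_add_left inner_add_right
        algebra_simps inner_commute power2_eq_square)
  moreover have "inner (x - (1/2) *\<^sub>R (a + w)) h = - inner (midpoint a w - x) h"
    by (simp add: midpoint_def inner_diff_left)
  ultimately show ?thesis by simp
qed

lemma diameter_ball_eq_cball: "diameter_ball (a, w) = cball (midpoint a w) (dist a w / 2)"
proof -
  have "dist (midpoint a w) x = norm (x - midpoint a w)" for x
    by (simp add: dist_norm norm_minus_commute)
  then show ?thesis
    unfolding diameter_ball_def set_eq_iff mem_cball inner_diff_diff_eq_midpoint by simp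
qed

lemma closed_diameter_ball: "closed (diameter_ball p)"
  and convex_diameter_ball: "convex (diameter_ball p)"
  and bounded_diameter_ball: "bounded (diameter_ball p)"
  by (cases p; simp add: diameter_ball_eq_cball)+

lemma convex_hull_finite_image_weights:
  fixes f :: "'b \<Rightarrow> 'a::real_vector"
  assumes "finite I" and "y \<in> convex hull (f ` I)"
  obtains u where "\<forall>i\<in>I. 0 \<le> u i" "sum u I = 1" "(\<Sum>i\<in>I. u i *\<^sub>R f i) = y"
proof -
  obtain v where v0: "\<forall>z\<in>f ` I. 0 \<le> v z" and v1: "sum v (f ` I) = 1"
    and vy: "(\<Sum>z\<in>f ` I. v z *\<^sub>R z) = y"
    using assms by (auto simp: convex_hull_finite)
  define n where "n z = card {i \<in> I. f i = z}" for z
  define u where "u i = v (f i) / n (f i)" for i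
  have n_pos: "n z > 0" if "z \<in> f ` I" for z
    unfolding n_def using assms(1) that by (auto simp: card_gt_0_iff)
  have fibre: "(\<Sum>i\<in>{i \<in> I. f i = z}. u i *\<^sub>R g z) = v z *\<^sub>R g z" if "z \<in> f ` I" for z and g :: "'a \<Rightarrow> 'c::real_vector"
  proof -
    have "(\<Sum>i\<in>{i \<in> I. f i = z}. u i *\<^sub>R g z) = (\<Sum>i\<in>{i \<in> I. f i = z}. (v z / n z) *\<^sub>R g z)"
      unfolding u_def by (intro sum.cong) auto
    also have "\<dots> = real (n z) *\<^sub>R (v z / n z) *\<^sub>R g z"
      by (simp add: n_def sum_constant_scaleR)
    also have "\<dots> = v z *\<^sub>R g z"
      using n_pos[OF that] by simp
    finally show ?thesis .
  qed
  show thesis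
  proof
    show "\<forall>i\<in>I. 0 \<le> u i" using v0 by (simp add: u_def)
    have "sum u I = (\<Sum>i\<in>I. u i *\<^sub>R (1::real))"
      by simp
    also have "\<dots> = (\<Sum>z\<in>f ` I. \<Sum>i\<in>{i \<in> I. f i = z}. u i *\<^sub>R (1::real))"
      by (rule sum.image_gen[OF assms(1)])
    also have "\<dots> = (\<Sum>z\<in>f ` I. v z *\<^sub>R (1::real))"
      by (intro sum.cong refl fibre)
    also have "\<dots> = 1"
      using v1 by simp
    finally show "sum u I = 1" .
    have "(\<Sum>i\<in>I. u i *\<^sub>R f i) = (\<Sum>z\<in>f ` I. \<Sum>i\<in>{i \<in> I. f i = z}. u i *\<^sub>R f i)"
      by (rule sum.image_gen[OF assms(1)])
    also have "\<dots> = (\<Sum>z\<in>f ` I. \<Sum>i\<in>{i \<in> I. f i = z}. u i *\<^sub>R z)"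
      by (intro sum.cong) auto
    also have "\<dots> = (\<Sum>z\<in>f ` I. v z *\<^sub>R z)"
      using fibre[of _ "\<lambda>z. z"] by (intro sum.cong) auto
    also have "\<dots> = y" by (fact vy)
    finally show "(\<Sum>i\<in>I. u i *\<^sub>R f i) = y" .
  qed
qed

lemma continuous_on_Max_finite:
  fixes f :: "'b \<Rightarrow> 'a::topological_space \<Rightarrow> real"
  assumes "finite F" "F \<noteq> {}" "\<And>p. p \<in> F \<Longrightarrow> continuous_on S (f p)"
  shows "continuous_on S (\<lambda>x. Max ((\<lambda>p. f p x) ` F))"
  using assms
proof (induction F rule: finite_ne_induct)
  case (insert y F)
  then show ?case by (simp add: continuous_on_max)
qed simp

lemma antimonotone_pairs_weighted_sum_nonpos:
  fixes I :: "('a::real_inner \<times> 'a) set"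
  assumes "finite I" and anti: "antimonotone_pairs I"
    and u0: "\<forall>p\<in>I. 0 \<le> u p" and u1: "sum u I = 1"
    and x: "x = (\<Sum>p\<in>I. u p *\<^sub>R midpoint (fst p) (snd p))"
  shows "(\<Sum>p\<in>I. u p * inner (x - fst p) (x - snd p)) \<le> 0"
proof -
  define a where "a = (\<Sum>p\<in>I. u p *\<^sub>R fst p)"
  define w where "w = (\<Sum>p\<in>I. u p *\<^sub>R snd p)"
  define S where "S = (\<Sum>p\<in>I. u p * inner (fst p) (snd p))"
  have "x = midpoint a w"
    unfolding x a_def w_def midpoint_def scaleR_add_right sum.distrib scaleR_sum_right
    by (simp add: mult.commute)
  then have mid: "inner (x - a) (x - w) \<le> 0"
    by (simp add: inner_diff_diff_eq_midpoint)
  have "(\<Sum>p\<in>I. u p * inner (x - fst p) (x - snd p))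
      = (\<Sum>p\<in>I. u p * (inner x x - inner x (snd p) - inner (fst p) x + inner (fst p) (snd p)))"
    by (intro sum.cong refl) (simp add: inner_diff_left inner_diff_right algebra_simps)
  also have "\<dots> = inner x x - inner x w - inner a x + S"
    unfolding a_def w_def S_def
    by (simp add: algebra_simps sum.distrib sum_subtractf inner_sum_left inner_sum_right
        sum_distrib_left[symmetric] sum_distrib_right[symmetric] u1)
  also have "\<dots> = inner (x - a) (x - w) + (S - inner a w)"
    by (simp add: inner_diff_left inner_diff_right)
  finally have eq: "(\<Sum>p\<in>I. u p * inner (x - fst p) (x - snd p)) = inner (x - a) (x - w) + (S - inner a w)" .
  define T where "T = (\<Sum>p\<in>I. \<Sum>q\<in>I. u p * u q * inner (fst p - fst q) (snd p - snd q))"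
  have "T = 2 * (S - inner a w)"
  proof -
    have "(\<Sum>p\<in>I. \<Sum>q\<in>I. u p * u q * inner (fst p - fst q) (snd p - snd q)) =
      (\<Sum>p\<in>I. \<Sum>q\<in>I. u p * u q * inner (fst p) (snd p)) - (\<Sum>p\<in>I. \<Sum>q\<in>I. u p * u q * inner (fst p) (snd q))
      - (\<Sum>p\<in>I. \<Sum>q\<in>I. u p * u q * inner (fst q) (snd p)) + (\<Sum>p\<in>I. \<Sum>q\<in>I. u p * u q * inner (fst q) (snd q))"
      by (simp add: inner_diff_left inner_diff_right algebra_simps sum.distrib sum_subtractf)
    also have "(\<Sum>p\<in>I. \<Sum>q\<in>I. u p * u q * inner (fst p) (snd p)) = S"
      unfolding S_def by (simp add: sum_distrib_left[symmetric] sum_distrib_right[symmetric] u1 mult.commute mult.left_commute)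
    also have "(\<Sum>p\<in>I. \<Sum>q\<in>I. u p * u q * inner (fst q) (snd q)) = S"
      unfolding S_def by (simp add: sum_distrib_left[symmetric] mult.assoc) (simp add: sum_distrib_right[symmetric] u1)
    also have "(\<Sum>p\<in>I. \<Sum>q\<in>I. u p * u q * inner (fst p) (snd q)) = inner a w"
      unfolding a_def w_def
      by (simp add: inner_sum_left inner_sum_right sum_distrib_left algebra_simps inner_commute)
        (subst sum.swap, simp add: algebra_simps)
    also have "(\<Sum>p\<in>I. \<Sum>q\<in>I. u p * u q * inner (fst q) (snd p)) = inner a w"
      unfolding a_def w_def
      by (simp add: inner_sum_left inner_sum_right sum_distrib_left algebra_simps inner_commute)
    finally show ?thesis unfolding T_def by simp
  qed
  moreover have "T \<le> 0"
    using u0 anti unfolding antimonotone_pairs_def T_def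
    by (intro sum_nonpos) (simp add: mult_nonneg_nonpos)
  ultimately have "S - inner a w \<le> 0" by simp
  then show ?thesis unfolding eq using mid by linarith
qed

lemma pair_forms_descent:
  fixes F :: "('a::real_inner \<times> 'a) set"
  assumes "finite F"
    and le: "\<And>p. p \<in> F \<Longrightarrow> inner (x - fst p) (x - snd p) \<le> m"
    and active: "\<And>p. p \<in> F \<Longrightarrow> inner (x - fst p) (x - snd p) = m \<Longrightarrow>
      (norm h)\<^sup>2 \<le> inner (midpoint (fst p) (snd p) - x) h"
    and "h \<noteq> 0"
  obtains t where "0 < t" "t < 1" "\<forall>p\<in>F. inner (x + t *\<^sub>R h - fst p) (x + t *\<^sub>R h - snd p) < m"
proof -
  have unit: "\<forall>\<^sub>F t in at_right (0::real). 0 < t \<and> t < 1"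
    unfolding eventually_at_right[OF zero_less_one] by (auto intro!: exI[of _ 1])
  have "\<forall>\<^sub>F t in at_right 0. inner (x + t *\<^sub>R h - fst p) (x + t *\<^sub>R h - snd p) < m"
    if "p \<in> F" for p
  proof (cases "inner (x - fst p) (x - snd p) = m")
    case True
    show ?thesis
      using unit
    proof (rule eventually_mono)
      fix t :: real assume t: "0 < t \<and> t < 1"
      have "t\<^sup>2 * (norm h)\<^sup>2 < 2 * t * (norm h)\<^sup>2"
        using t \<open>h \<noteq> 0\<close> by (simp add: power2_eq_square)
      also have "\<dots> \<le> 2 * t * inner (midpoint (fst p) (snd p) - x) h"
        using active[OF that True] t by simp
      finally show "inner (x + t *\<^sub>R h - fst p) (x + t *\<^sub>R h - snd p) < m"
        unfolding inner_diff_diff_add_scaleR True by simp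
    qed
  next
    case False
    then have "inner (x + 0 *\<^sub>R h - fst p) (x + 0 *\<^sub>R h - snd p) < m"
      using le[OF that] by simp
    moreover have "((\<lambda>t. inner (x + t *\<^sub>R h - fst p) (x + t *\<^sub>R h - snd p))
        \<longlongrightarrow> inner (x + 0 *\<^sub>R h - fst p) (x + 0 *\<^sub>R h - snd p)) (at_right 0)"
      by (intro tendsto_intros)
    ultimately show ?thesis
      by (auto dest: order_tendstoD(2))
  qed
  then have "\<forall>\<^sub>F t in at_right 0. \<forall>p\<in>F. inner (x + t *\<^sub>R h - fst p) (x + t *\<^sub>R h - snd p) < m"
    using \<open>finite F\<close> by (intro eventually_ball_finite) auto
  with unit show thesis
    using that eventually_happens'[OF trivial_limit_at_right_real eventually_conj] by blast
qed

lemma min_max_pair_forms_in_active_hull: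
  fixes F :: "('a::real_inner \<times> 'a) set"
  assumes "finite F" and "convex C"
    and mid_C: "(\<lambda>p. midpoint (fst p) (snd p)) ` F \<subseteq> C" and "x \<in> C"
    and le: "\<And>p. p \<in> F \<Longrightarrow> inner (x - fst p) (x - snd p) \<le> m"
    and minimax: "\<And>y. y \<in> C \<Longrightarrow> \<exists>p\<in>F. m \<le> inner (y - fst p) (y - snd p)"
  shows "x \<in> convex hull ((\<lambda>p. midpoint (fst p) (snd p)) ` {p \<in> F. inner (x - fst p) (x - snd p) = m})"
    (is "x \<in> ?D")
proof (rule ccontr)
  assume "x \<notin> ?D"
  obtain p where "p \<in> F" "m \<le> inner (x - fst p) (x - snd p)"
    using minimax[OF \<open>x \<in> C\<close>] by blast
  with le have "inner (x - fst p) (x - snd p) = m"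
    by (simp add: order_antisym)
  with \<open>p \<in> F\<close> have "midpoint (fst p) (snd p) \<in> ?D"
    by (intro hull_inc imageI) simp
  then have "?D \<noteq> {}"
    by blast
  moreover have "compact ?D"
    using \<open>finite F\<close> by (simp add: finite_imp_compact_convex_hull)
  ultimately obtain y where "y \<in> ?D" and y_closest: "\<forall>z\<in>?D. dist x y \<le> dist x z"
    using continuous_attains_inf[of ?D "dist x"] continuous_on_dist[OF continuous_on_const continuous_on_id]
    by blast
  define h where "h = y - x"
  have "h \<noteq> 0"
    using \<open>y \<in> ?D\<close> \<open>x \<notin> ?D\<close> by (auto simp: h_def)
  have closest: "(norm h)\<^sup>2 \<le> inner (z - x) h" if "z \<in> ?D" for z
  proof -
    have "inner (x - y) (z - y) \<le> 0"
      using any_closest_point_dot[OF convex_convex_hull compact_imp_closed[OF \<open>compact ?D\<close>]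
          \<open>y \<in> ?D\<close> that] y_closest by blast
    then show ?thesis
      unfolding h_def power2_norm_eq_inner
      by (simp add: inner_diff_left inner_diff_right inner_commute)
  qed
  have "(norm h)\<^sup>2 \<le> inner (midpoint (fst p) (snd p) - x) h"
    if "p \<in> F" "inner (x - fst p) (x - snd p) = m" for p
    using that by (intro closest hull_inc imageI) simp
  then obtain t where t: "0 < t" "t < 1"
    and descent: "\<forall>p\<in>F. inner (x + t *\<^sub>R h - fst p) (x + t *\<^sub>R h - snd p) < m"
    using pair_forms_descent[OF \<open>finite F\<close> le _ \<open>h \<noteq> 0\<close>] by blast
  have "?D \<subseteq> C"
    using mid_C \<open>convex C\<close> by (intro hull_minimal) auto
  moreover have "x + t *\<^sub>R h = (1 - t) *\<^sub>R x + t *\<^sub>R y"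
    by (simp add: h_def algebra_simps)
  ultimately have "x + t *\<^sub>R h \<in> C"
    using convexD[OF \<open>convex C\<close> \<open>x \<in> C\<close>, of y "1 - t" t] \<open>y \<in> ?D\<close> t by auto
  then show False
    using minimax descent by (blast dest: leD)
qed

lemma antimonotone_pairs_finite_Inter_diameter_balls:
  assumes "finite F" and "antimonotone_pairs F"
  shows "\<Inter> (diameter_ball ` F) \<noteq> {}"
proof (cases "F = {}")
  case False
  define f where "f x p = inner (x - fst p) (x - snd p)" for x and p :: "'a \<times> 'a"
  define c where "c p = midpoint (fst p) (snd p)" for p :: "'a \<times> 'a"
  define C where "C = convex hull (c ` F)"
  have "continuous_on C (\<lambda>x. Max (f x ` F))"
    using \<open>finite F\<close> False unfolding f_def by (intro continuous_on_Max_finite continuous_intros)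
  moreover have "compact C" "C \<noteq> {}"
    using \<open>finite F\<close> False by (simp_all add: C_def finite_imp_compact_convex_hull)
  ultimately obtain x where "x \<in> C" and x_min: "\<forall>y\<in>C. Max (f x ` F) \<le> Max (f y ` F)"
    using continuous_attains_inf by blast
  define m where "m = Max (f x ` F)"
  have le: "f x p \<le> m" if "p \<in> F" for p
    using \<open>finite F\<close> that by (simp add: m_def)
  have "\<exists>p\<in>F. m \<le> f y p" if "y \<in> C" for y
    using x_min that \<open>finite F\<close> False by (simp add: m_def Max_ge_iff)
  then have x_hull: "x \<in> convex hull (c ` {p \<in> F. f x p = m})"
    using min_max_pair_forms_in_active_hull[OF \<open>finite F\<close> _ _ \<open>x \<in> C\<close>, of m] le
    unfolding C_def c_def f_def by (auto intro: hull_inc)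
  obtain u where u0: "\<forall>p\<in>{p \<in> F. f x p = m}. 0 \<le> u p"
    and u1: "sum u {p \<in> F. f x p = m} = 1" and ux: "(\<Sum>p\<in>{p \<in> F. f x p = m}. u p *\<^sub>R c p) = x"
    using convex_hull_finite_image_weights[OF _ x_hull] \<open>finite F\<close> by auto
  have "antimonotone_pairs {p \<in> F. f x p = m}"
    using \<open>antimonotone_pairs F\<close> unfolding antimonotone_pairs_def by blast
  then have "(\<Sum>p\<in>{p \<in> F. f x p = m}. u p * f x p) \<le> 0"
    using antimonotone_pairs_weighted_sum_nonpos[OF _ _ u0 u1 ux[unfolded c_def, symmetric]] \<open>finite F\<close>
    unfolding f_def by simp
  also have "(\<Sum>p\<in>{p \<in> F. f x p = m}. u p * f x p) = m"
    using u1 by (simp add: sum_distrib_right[symmetric])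
  finally have "x \<in> \<Inter> (diameter_ball ` F)"
    using le unfolding diameter_ball_def f_def by fastforce
  then show ?thesis by blast
qed simp

section \<open>Closed convex sets with the finite intersection property\<close>

definition min_norm_sq :: "'a::real_normed_vector set \<Rightarrow> real" where
  "min_norm_sq S = Inf ((\<lambda>z. (norm z)\<^sup>2) ` S)"

lemma min_norm_sq_le: "z \<in> S \<Longrightarrow> min_norm_sq S \<le> (norm z)\<^sup>2"
  unfolding min_norm_sq_def by (intro cInf_lower imageI) (auto intro: bdd_belowI[of _ 0])

lemma min_norm_sq_antimono: "S \<noteq> {} \<Longrightarrow> S \<subseteq> S' \<Longrightarrow> min_norm_sq S' \<le> min_norm_sq S"
  unfolding min_norm_sq_def by (intro cInf_superset_mono image_mono) (auto intro: bdd_belowI[of _ 0])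

lemma min_norm_sq_lessE:
  assumes "S \<noteq> {}" and "min_norm_sq S < c"
  obtains z where "z \<in> S" "(norm z)\<^sup>2 < c"
  using cInf_lessD[of "(\<lambda>z. (norm z)\<^sup>2) ` S" c] assms unfolding min_norm_sq_def by blast

lemma convex_near_min_norm_dist_le:
  fixes S :: "'a::real_inner set"
  assumes "convex S" and "x \<in> S" and "y \<in> S"
    and "(norm x)\<^sup>2 \<le> min_norm_sq S + \<epsilon>" and "(norm y)\<^sup>2 \<le> min_norm_sq S + \<epsilon>"
  shows "(norm (x - y))\<^sup>2 \<le> 4 * \<epsilon>"
proof -
  have "midpoint x y \<in> S"
    using convexD[OF \<open>convex S\<close> \<open>x \<in> S\<close> \<open>y \<in> S\<close>, of "1/2" "1/2"] by (simp add: midpoint_def scaleR_add_right)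
  then have "min_norm_sq S \<le> (norm (midpoint x y))\<^sup>2"
    by (rule min_norm_sq_le)
  moreover have "(norm (x - y))\<^sup>2 = 2 * (norm x)\<^sup>2 + 2 * (norm y)\<^sup>2 - 4 * (norm (midpoint x y))\<^sup>2"
    unfolding midpoint_def power2_norm_eq_inner
    by (simp add: inner_diff_left inner_diff_right inner_add_left inner_add_right inner_commute)
      (simp add: field_simps)
  ultimately show ?thesis
    using assms(4,5) by linarith
qed

lemma finite_subfamilies_approx_Sup:
  fixes d :: "'a set \<Rightarrow> real"
  assumes bdd: "bdd_above (d ` {\<F>. finite \<F> \<and> \<F> \<subseteq> \<K>})"
    and mono: "\<And>\<F> \<G>. \<F> \<subseteq> \<G> \<Longrightarrow> finite \<G> \<Longrightarrow> \<G> \<subseteq> \<K> \<Longrightarrow> d \<F> \<le> d \<G>"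
  obtains G where "\<And>n. finite (G n)" "\<And>n. G n \<subseteq> \<K>" "incseq G"
    "\<And>n. Sup (d ` {\<F>. finite \<F> \<and> \<F> \<subseteq> \<K>}) - 1 / (real n + 1) < d (G n)"
proof -
  let ?s = "Sup (d ` {\<F>. finite \<F> \<and> \<F> \<subseteq> \<K>})"
  have "\<exists>\<F>. finite \<F> \<and> \<F> \<subseteq> \<K> \<and> ?s - 1 / (real n + 1) < d \<F>" for n
  proof -
    have "?s - 1 / (real n + 1) < ?s" by simp
    then show ?thesis
      using less_cSup_iff[OF _ bdd, of "?s - 1 / (real n + 1)"] by blast
  qed
  then obtain F where F: "\<And>n. finite (F n) \<and> F n \<subseteq> \<K> \<and> ?s - 1 / (real n + 1) < d (F n)"
    by metis
  define G where "G n = \<Union> (F ` {..n})" for n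
  show thesis
  proof
    show "finite (G n)" "G n \<subseteq> \<K>" for n
      using F by (auto simp: G_def)
    show "incseq G"
      unfolding G_def by (intro monoI Union_mono image_mono) auto
    have "F n \<subseteq> G n" for n
      by (auto simp: G_def)
    then show "?s - 1 / (real n + 1) < d (G n)" for n
      using F[of n] mono[of "F n" "G n"] \<open>finite (G n)\<close> \<open>G n \<subseteq> \<K>\<close> by fastforce
  qed
qed

lemma decreasing_closed_nests_common_point:
  fixes T :: "'b \<Rightarrow> nat \<Rightarrow> 'a::complete_space set"
  assumes closed: "\<And>K n. K \<in> \<K> \<Longrightarrow> closed (T K n)" and ne: "\<And>K n. K \<in> \<K> \<Longrightarrow> T K n \<noteq> {}"
    and dec: "\<And>K m n. m \<le> n \<Longrightarrow> T K n \<subseteq> T K m"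
    and "K\<^sub>0 \<in> \<K>" and sub: "\<And>K n. T K n \<subseteq> T K\<^sub>0 n"
    and small: "\<And>\<epsilon>. \<epsilon> > 0 \<Longrightarrow> \<exists>n. \<forall>x\<in>T K\<^sub>0 n. \<forall>y\<in>T K\<^sub>0 n. dist x y < \<epsilon>"
  obtains a where "\<And>K n. K \<in> \<K> \<Longrightarrow> a \<in> T K n"
proof -
  obtain a where a: "\<Inter> (range (T K\<^sub>0)) = {a}"
    using decreasing_closed_nest_sing[OF closed ne dec small] \<open>K\<^sub>0 \<in> \<K>\<close> by blast
  have "a \<in> T K n" if K: "K \<in> \<K>" for K n
  proof -
    have small_K: "\<exists>n. \<forall>x\<in>T K n. \<forall>y\<in>T K n. dist x y < \<epsilon>" if "\<epsilon> > 0" for \<epsilon>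
      using small[OF that] sub by blast
    obtain b where "\<And>n. b \<in> T K n"
      using decreasing_closed_nest[of "T K", OF closed[OF K] ne[OF K] dec small_K] by blast
    moreover from this have "b = a"
      using sub a by blast
    ultimately show ?thesis by blast
  qed
  then show thesis by (rule that)
qed

lemma Inter_closed_convex_nonempty:
  fixes \<K> :: "'a::{real_inner, complete_space} set set"
  assumes closed: "\<And>K. K \<in> \<K> \<Longrightarrow> closed K" and convex: "\<And>K. K \<in> \<K> \<Longrightarrow> convex K"
    and "K\<^sub>0 \<in> \<K>" and "bounded K\<^sub>0"
    and fip: "\<And>\<F>. finite \<F> \<Longrightarrow> \<F> \<subseteq> \<K> \<Longrightarrow> \<Inter> \<F> \<noteq> {}"
  shows "\<Inter> \<K> \<noteq> {}"
proof -
  define S where "S \<F> = \<Inter> (insert K\<^sub>0 \<F>)" for \<F>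
  define Fs where "Fs = {\<F>. finite \<F> \<and> \<F> \<subseteq> \<K>}"
  have S_ne: "S \<F> \<noteq> {}" if "\<F> \<in> Fs" for \<F>
    using fip[of "insert K\<^sub>0 \<F>"] that \<open>K\<^sub>0 \<in> \<K>\<close> by (simp add: S_def Fs_def)
  have d_mono: "min_norm_sq (S \<F>) \<le> min_norm_sq (S \<G>)" if "\<F> \<subseteq> \<G>" "finite \<G>" "\<G> \<subseteq> \<K>" for \<F> \<G>
    using S_ne[of \<G>] that by (intro min_norm_sq_antimono) (auto simp: S_def Fs_def)
  obtain R where R: "\<And>z. z \<in> K\<^sub>0 \<Longrightarrow> norm z \<le> R"
    using \<open>bounded K\<^sub>0\<close> by (auto simp: bounded_iff)
  have "min_norm_sq (S \<F>) \<le> R\<^sup>2" if "\<F> \<in> Fs" for \<F>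
  proof -
    obtain z where "z \<in> S \<F>" using S_ne[OF \<open>\<F> \<in> Fs\<close>] by blast
    then have "norm z \<le> R" using R by (auto simp: S_def)
    then show ?thesis using min_norm_sq_le[OF \<open>z \<in> S \<F>\<close>] by (smt (verit) norm_ge_zero power_mono)
  qed
  then have bdd: "bdd_above ((\<lambda>\<F>. min_norm_sq (S \<F>)) ` Fs)" by (intro bdd_aboveI) auto
  define s where "s = Sup ((\<lambda>\<F>. min_norm_sq (S \<F>)) ` Fs)"
  have d_le_s: "min_norm_sq (S \<F>) \<le> s" if "\<F> \<in> Fs" for \<F>
    unfolding s_def using bdd that by (auto intro: cSup_upper)
  obtain G where "\<And>n. finite (G n)" "\<And>n. G n \<subseteq> \<K>" "incseq G"
    and G_s: "\<And>n. s - 1 / (real n + 1) < min_norm_sq (S (G n))"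
    using finite_subfamilies_approx_Sup[OF bdd[unfolded Fs_def] d_mono] unfolding s_def Fs_def by blast
  then have G_fam: "insert K (G n) \<in> Fs" if "K \<in> \<K>" for K n
    using that by (simp add: Fs_def)
  \<comment> \<open>Since \<open>min_norm_sq (S (G n))\<close> is within \<open>1/(n+1)\<close> of its supremum \<open>s\<close>, the nest
    \<open>T K\<^sub>0\<close> shrinks to a point, which therefore lies in each nest \<open>T K \<subseteq> T K\<^sub>0\<close>.\<close>
  define T where "T K n = S (insert K (G n)) \<inter> {z. (norm z)\<^sup>2 \<le> s + 1 / (real n + 1)}" for K n
  have T_small: "(norm (x - y))\<^sup>2 \<le> 8 / (real n + 1)" if "x \<in> T K\<^sub>0 n" "y \<in> T K\<^sub>0 n" for n x y
  proof -
    have "S (insert K\<^sub>0 (G n)) = S (G n)"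
      by (simp add: S_def)
    moreover have "convex (S (G n))"
      unfolding S_def using G_fam[OF \<open>K\<^sub>0 \<in> \<K>\<close>, of n] convex \<open>K\<^sub>0 \<in> \<K>\<close>
      by (intro convex_Inter) (auto simp: Fs_def)
    ultimately show ?thesis
      using that G_s[of n] convex_near_min_norm_dist_le[of "S (G n)" x y "2 / (real n + 1)"]
      by (auto simp: T_def)
  qed
  obtain a where a: "\<And>K n. K \<in> \<K> \<Longrightarrow> a \<in> T K n"
  proof (rule decreasing_closed_nests_common_point)
    show "closed (T K n)" if "K \<in> \<K>" for K n
      using that G_fam closed \<open>K\<^sub>0 \<in> \<K>\<close> unfolding T_def S_def Fs_def
      by (intro closed_Int closed_Inter closed_Collect_le continuous_intros) auto
    show "T K n \<noteq> {}" if K: "K \<in> \<K>" for K n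
    proof -
      have "min_norm_sq (S (insert K (G n))) < s + 1 / (real n + 1)"
        using d_le_s[OF G_fam[OF K]] by (smt (verit) divide_pos_pos of_nat_less_0_iff)
      then obtain z where "z \<in> S (insert K (G n))" "(norm z)\<^sup>2 < s + 1 / (real n + 1)"
        by (rule min_norm_sq_lessE[OF S_ne[OF G_fam[OF K]]])
      then show ?thesis by (auto simp: T_def)
    qed
    show "T K n \<subseteq> T K m" if "m \<le> n" for K m n
    proof -
      have "S (insert K (G n)) \<subseteq> S (insert K (G m))"
        using monoD[OF \<open>incseq G\<close> that] by (auto simp: S_def)
      moreover have "1 / (real n + 1) \<le> 1 / (real m + 1)"
        using that by (simp add: frac_le)
      ultimately show ?thesis by (auto simp: T_def)
    qed
    show "T K n \<subseteq> T K\<^sub>0 n" for K n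
      by (auto simp: T_def S_def)
    show "\<exists>n. \<forall>x\<in>T K\<^sub>0 n. \<forall>y\<in>T K\<^sub>0 n. dist x y < \<epsilon>" if "\<epsilon> > 0" for \<epsilon>
    proof -
      obtain n where "inverse (real (Suc n)) < \<epsilon>\<^sup>2 / 8"
        using reals_Archimedean \<open>\<epsilon> > 0\<close> by (metis divide_pos_pos zero_less_numeral zero_less_power)
      then have "8 / (real n + 1) < \<epsilon>\<^sup>2"
        by (simp add: field_simps)
      then have "dist x y < \<epsilon>" if "x \<in> T K\<^sub>0 n" "y \<in> T K\<^sub>0 n" for x y
        using T_small[OF that] \<open>\<epsilon> > 0\<close> by (simp add: dist_norm power2_less_imp_less)
      then show ?thesis by blast
    qed
  qed (use \<open>K\<^sub>0 \<in> \<K>\<close> in auto)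
  then have "a \<in> K" if "K \<in> \<K>" for K
    using a[OF that, of 0] by (auto simp: T_def S_def)
  then show ?thesis by blast
qed

lemma antimonotone_pairs_Inter_diameter_balls:
  fixes P :: "('a::{real_inner, complete_space} \<times> 'a) set"
  assumes "antimonotone_pairs P"
  shows "\<Inter> (diameter_ball ` P) \<noteq> {}"
proof (cases "P = {}")
  case False
  then obtain p where "p \<in> P" by blast
  show ?thesis
  proof (rule Inter_closed_convex_nonempty)
    show "diameter_ball p \<in> diameter_ball ` P"
      using \<open>p \<in> P\<close> by blast
    fix \<F> assume "finite \<F>" "\<F> \<subseteq> diameter_ball ` P"
    then obtain F where "F \<subseteq> P" "finite F" "\<F> = diameter_ball ` F"
      by (metis finite_subset_image)
    moreover have "antimonotone_pairs F"
      using \<open>antimonotone_pairs P\<close> \<open>F \<subseteq> P\<close> unfolding antimonotone_pairs_def by blast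
    ultimately show "\<Inter> \<F> \<noteq> {}"
      using antimonotone_pairs_finite_Inter_diameter_balls by blast
  qed (auto simp: closed_diameter_ball convex_diameter_ball bounded_diameter_ball)
qed simp

section \<open>Minty's theorem and the resolvent\<close>

lemma maximal_monotoneD:
  assumes "maximal_monotone A" "u \<in> A x" "v \<in> A y"
  shows "inner (x - y) (u - v) \<ge> 0"
  using assms unfolding maximal_monotone_def monotone_op_def by blast

lemma maximal_monotone_extend:
  assumes "maximal_monotone A" and "\<And>x v. v \<in> A x \<Longrightarrow> inner (y - x) (u - v) \<ge> 0"
  shows "u \<in> A y"
proof -
  define B where "B x = (if x = y then insert u (A x) else A x)" for x
  have "inner (x1 - x2) (u1 - u2) \<ge> 0" if "u1 \<in> B x1" "u2 \<in> B x2" for x1 x2 u1 u2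
  proof -
    have 1: "u1 \<in> A x1 \<or> x1 = y \<and> u1 = u" and 2: "u2 \<in> A x2 \<or> x2 = y \<and> u2 = u"
      using that by (auto simp: B_def split: if_splits)
    have "inner (y - x1) (u - u1) = inner (x1 - y) (u1 - u)"
      by (simp add: inner_diff_left inner_diff_right algebra_simps)
    then show ?thesis
      using 1 2 assms(2)[of u1 x1] assms(2)[of u2 x2] maximal_monotoneD[OF assms(1)] by auto
  qed
  then have "monotone_op B"
    unfolding monotone_op_def by blast
  moreover have "A x \<subseteq> B x" for x
    by (auto simp: B_def)
  ultimately have "B = A"
    using assms(1) unfolding maximal_monotone_def by blast
  moreover have "u \<in> B y"
    by (simp add: B_def)
  ultimately show ?thesis
    by simp
qed

lemma maximal_monotone_Minty:
  fixes A :: "'a::{real_inner, complete_space} \<Rightarrow> 'a set"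
  assumes "maximal_monotone A" and "b > 0"
  shows "\<exists>y. \<exists>u\<in>A y. z = y + b *\<^sub>R u"
proof -
  define P where "P = {(x, z - b *\<^sub>R v) | x v. v \<in> A x}"
  have "antimonotone_pairs P"
    unfolding antimonotone_pairs_def
  proof (intro ballI)
    fix p q assume "p \<in> P" "q \<in> P"
    then obtain x v x' v' where pq: "p = (x, z - b *\<^sub>R v)" "q = (x', z - b *\<^sub>R v')"
      and v: "v \<in> A x" and v': "v' \<in> A x'"
      unfolding P_def by blast
    have "inner (x - x') (v - v') \<ge> 0"
      by (rule maximal_monotoneD[OF assms(1) v v'])
    moreover have "inner (fst p - fst q) (snd p - snd q) = - b * inner (x - x') (v - v')"
      unfolding pq by (simp add: inner_diff_right algebra_simps)
    ultimately show "inner (fst p - fst q) (snd p - snd q) \<le> 0"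
      using \<open>b > 0\<close> by simp
  qed
  then obtain y where y: "y \<in> \<Inter> (diameter_ball ` P)"
    using antimonotone_pairs_Inter_diameter_balls by blast
  define u where "u = (1 / b) *\<^sub>R (z - y)"
  have "inner (y - x) (u - v) \<ge> 0" if "v \<in> A x" for x v
  proof -
    have "inner (y - x) (y - (z - b *\<^sub>R v)) \<le> 0"
      using y that by (auto simp: P_def diameter_ball_def)
    moreover have "inner (y - x) (y - (z - b *\<^sub>R v)) = - b * inner (y - x) (u - v)"
      unfolding u_def using \<open>b > 0\<close> by (simp add: inner_diff_right algebra_simps)
    ultimately show ?thesis
      using \<open>b > 0\<close> by (simp add: zero_le_mult_iff)
  qed
  then have "u \<in> A y"
    by (rule maximal_monotone_extend[OF assms(1)])
  moreover have "z = y + b *\<^sub>R u"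
    unfolding u_def using \<open>b > 0\<close> by simp
  ultimately show ?thesis by blast
qed

lemma resolvent_eqI:
  assumes "maximal_monotone A" and "b > 0" and "u \<in> A y" and "z = y + b *\<^sub>R u"
  shows "resolvent A b z = y"
  unfolding resolvent_def
proof (rule the_equality)
  show "\<exists>u\<in>A y. z = y + b *\<^sub>R u"
    using assms(3,4) by blast
next
  fix y' assume "\<exists>u'\<in>A y'. z = y' + b *\<^sub>R u'"
  then obtain u' where "u' \<in> A y'" and z': "z = y' + b *\<^sub>R u'" by blast
  then have "inner (y' - y) (u' - u) \<ge> 0"
    using maximal_monotoneD[OF assms(1) _ assms(3)] by blast
  moreover have "b *\<^sub>R (u' - u) = - (y' - y)"
    using z' assms(4) by (simp add: algebra_simps)
  then have "b * inner (y' - y) (u' - u) = - inner (y' - y) (y' - y)"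
    by (metis inner_minus_right inner_scaleR_right)
  ultimately have "inner (y' - y) (y' - y) \<le> 0"
    using \<open>b > 0\<close> by (smt (verit) mult_nonneg_nonneg)
  then show "y' = y"
    by (metis antisym inner_ge_zero inner_eq_zero_iff right_minus_eq)
qed

lemma resolvent_graph:
  fixes A :: "'a::{real_inner, complete_space} \<Rightarrow> 'a set"
  assumes "maximal_monotone A" and "b > 0"
  obtains u where "u \<in> A (resolvent A b z)" "z = resolvent A b z + b *\<^sub>R u"
  using maximal_monotone_Minty[OF assms] resolvent_eqI[OF assms] by metis

lemma resolvent_zero:
  assumes "maximal_monotone A" and "b > 0" and "p \<in> zeros A"
  shows "resolvent A b p = p"
  using resolvent_eqI[OF assms(1,2), of 0 p p] assms(3) by (simp add: zeros_def)

lemma resolvent_firmly_nonexpansive: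
  fixes A :: "'a::{real_inner, complete_space} \<Rightarrow> 'a set"
  assumes "maximal_monotone A" and "b > 0"
  shows "(norm (resolvent A b z1 - resolvent A b z2))\<^sup>2
    + (norm ((z1 - resolvent A b z1) - (z2 - resolvent A b z2)))\<^sup>2 \<le> (norm (z1 - z2))\<^sup>2"
proof -
  obtain u1 where u1: "u1 \<in> A (resolvent A b z1)" "z1 = resolvent A b z1 + b *\<^sub>R u1"
    using resolvent_graph[OF assms] by blast
  obtain u2 where u2: "u2 \<in> A (resolvent A b z2)" "z2 = resolvent A b z2 + b *\<^sub>R u2"
    using resolvent_graph[OF assms] by blast
  define d where "d = resolvent A b z1 - resolvent A b z2"
  have "inner d (u1 - u2) \<ge> 0"
    unfolding d_def by (rule maximal_monotoneD[OF assms(1) u1(1) u2(1)])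
  moreover have "(z1 - resolvent A b z1) - (z2 - resolvent A b z2) = b *\<^sub>R (u1 - u2)"
    using u1(2) u2(2) by (simp add: algebra_simps)
  moreover have "z1 - z2 = d + b *\<^sub>R (u1 - u2)"
    using u1(2) u2(2) by (simp add: d_def algebra_simps)
  then have "(norm (z1 - z2))\<^sup>2 = (norm d)\<^sup>2 + 2 * b * inner d (u1 - u2) + (norm (b *\<^sub>R (u1 - u2)))\<^sup>2"
    unfolding power2_norm_eq_inner by (simp add: inner_add_left inner_add_right inner_commute)
  ultimately show ?thesis
    using \<open>b > 0\<close> by (simp add: d_def)
qed

lemma resolvent_nonexpansive:
  fixes A :: "'a::{real_inner, complete_space} \<Rightarrow> 'a set"
  assumes "maximal_monotone A" and "b > 0"
  shows "norm (resolvent A b z1 - resolvent A b z2) \<le> norm (z1 - z2)"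
  using resolvent_firmly_nonexpansive[OF assms, of z1 z2]
  by (smt (verit) norm_ge_zero power2_le_imp_le zero_le_power2)

lemma resolvent_dist_zero_le:
  fixes A :: "'a::{real_inner, complete_space} \<Rightarrow> 'a set"
  assumes "maximal_monotone A" and "b > 0" and "p \<in> zeros A"
  shows "norm (resolvent A b z - p) \<le> norm (z - p)" and "norm (z - resolvent A b z) \<le> norm (z - p)"
  using resolvent_firmly_nonexpansive[OF assms(1,2), of z p] resolvent_zero[OF assms]
  by (smt (verit) diff_self diff_zero norm_ge_zero power2_le_imp_le zero_le_power2)+

lemma resolvent_residual_le:
  fixes A :: "'a::{real_inner, complete_space} \<Rightarrow> 'a set"
  assumes "maximal_monotone A" and "b > 0" and "v \<in> A y"
  shows "norm (y - resolvent A b y) \<le> b * norm v"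
proof -
  obtain w where w: "w \<in> A (resolvent A b y)" "y = resolvent A b y + b *\<^sub>R w"
    using resolvent_graph[OF assms(1,2)] by blast
  then have yJ: "y - resolvent A b y = b *\<^sub>R w"
    by (simp add: algebra_simps)
  have "inner (y - resolvent A b y) (v - w) \<ge> 0"
    by (rule maximal_monotoneD[OF assms(1) assms(3) w(1)])
  then have "inner w (v - w) \<ge> 0"
    using \<open>b > 0\<close> by (simp add: yJ zero_le_mult_iff)
  then have "(norm w)\<^sup>2 \<le> norm w * norm v"
    using norm_cauchy_schwarz[of w v] by (simp add: power2_norm_eq_inner inner_diff_right)
  then have "norm w \<le> norm v"
    by (cases "w = 0") (simp_all add: power2_eq_square)
  then show ?thesis
    using \<open>b > 0\<close> by (simp add: yJ)
qed

section \<open>The Halpern-type proximal point algorithm\<close>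

lemma norm_convex_combination_diff_le:
  fixes u w p :: "'a::real_normed_vector"
  assumes "0 \<le> \<alpha>" and "\<alpha> \<le> 1"
  shows "norm (\<alpha> *\<^sub>R u + (1 - \<alpha>) *\<^sub>R w - p) \<le> \<alpha> * norm (u - p) + (1 - \<alpha>) * norm (w - p)"
proof -
  have "\<alpha> *\<^sub>R u + (1 - \<alpha>) *\<^sub>R w - p = \<alpha> *\<^sub>R (u - p) + (1 - \<alpha>) *\<^sub>R (w - p)"
    by (simp add: algebra_simps)
  then show ?thesis
    using norm_triangle_ineq[of "\<alpha> *\<^sub>R (u - p)" "(1 - \<alpha>) *\<^sub>R (w - p)"] assms by simp
qed

lemma HPPA_dist_zero_le:
  fixes A :: "'a::{real_inner, complete_space} \<Rightarrow> 'a set"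
  assumes "maximal_monotone A" and alpha: "\<And>n. 0 < \<alpha> n \<and> \<alpha> n < 1" and beta: "\<And>n. \<beta> n > 0"
    and HPPA: "\<And>n. x (Suc n) = \<alpha> n *\<^sub>R x 0 + (1 - \<alpha> n) *\<^sub>R (resolvent A (\<beta> n) (x n) + e n)"
    and "p \<in> zeros A"
  shows "norm (x n - p) \<le> norm (x 0 - p) + (\<Sum>i<n. norm (e i))"
proof (induction n)
  case (Suc n)
  have "norm (resolvent A (\<beta> n) (x n) + e n - p) \<le> norm (resolvent A (\<beta> n) (x n) - p) + norm (e n)"
    using norm_triangle_ineq[of "resolvent A (\<beta> n) (x n) - p" "e n"] by (simp add: algebra_simps)
  also have "\<dots> \<le> norm (x 0 - p) + (\<Sum>i<Suc n. norm (e i))"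
    using resolvent_dist_zero_le(1)[OF assms(1) beta assms(5), of n "x n"] Suc.IH by simp
  finally have "norm (x (Suc n) - p) \<le> \<alpha> n * norm (x 0 - p) + (1 - \<alpha> n) * (norm (x 0 - p) + (\<Sum>i<Suc n. norm (e i)))"
    unfolding HPPA using norm_convex_combination_diff_le[of "\<alpha> n" "x 0" _ p] alpha[of n]
    by (smt (verit) mult_left_mono)
  also have "\<dots> = norm (x 0 - p) + (\<Sum>i<Suc n. norm (e i)) - \<alpha> n * (\<Sum>i<Suc n. norm (e i))"
    by (simp add: algebra_simps)
  also have "\<dots> \<le> norm (x 0 - p) + (\<Sum>i<Suc n. norm (e i))"
    using alpha[of n] by (simp add: sum_nonneg)
  finally show ?case .
qed simp

lemma HPPA_step_residual_le:
  fixes A :: "'a::{real_inner, complete_space} \<Rightarrow> 'a set"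
  assumes "maximal_monotone A" and "0 \<le> \<alpha>" "\<alpha> \<le> 1" and "\<beta> > 0" and "\<gamma> > 0" and "p \<in> zeros A"
    and w: "w = \<alpha> *\<^sub>R u + (1 - \<alpha>) *\<^sub>R (resolvent A \<beta> z + e)"
  shows "norm (w - resolvent A \<gamma> w) \<le> 2 * (\<alpha> * (norm (u - p) + norm (z - p)) + norm e) + \<gamma> / \<beta> * norm (z - p)"
proof -
  define y where "y = resolvent A \<beta> z"
  obtain v where "v \<in> A y" and z: "z = y + \<beta> *\<^sub>R v"
    using resolvent_graph[OF assms(1,4)] unfolding y_def by blast
  have "norm (w - y) \<le> \<alpha> * norm (u - y) + (1 - \<alpha>) * norm (y + e - y)"
    unfolding w y_def by (rule norm_convex_combination_diff_le[OF assms(2,3)])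
  also have "\<dots> \<le> \<alpha> * (norm (u - p) + norm (z - p)) + norm e"
  proof (rule add_mono)
    have "norm (u - y) \<le> norm (u - p) + norm (y - p)"
      using norm_triangle_ineq4[of "u - p" "y - p"] by simp
    also have "norm (y - p) \<le> norm (z - p)"
      unfolding y_def by (rule resolvent_dist_zero_le(1)[OF assms(1,4,6)])
    finally show "\<alpha> * norm (u - y) \<le> \<alpha> * (norm (u - p) + norm (z - p))"
      using assms(2) by (simp add: mult_left_mono)
    show "(1 - \<alpha>) * norm (y + e - y) \<le> norm e"
      using assms(2,3) by (simp add: mult_left_le_one_le)
  qed
  finally have wy: "norm (w - y) \<le> \<alpha> * (norm (u - p) + norm (z - p)) + norm e" .
  have "\<beta> * norm v = norm (z - y)"
    using \<open>\<beta> > 0\<close> by (simp add: z)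
  also have "\<dots> \<le> norm (z - p)"
    unfolding y_def by (rule resolvent_dist_zero_le(2)[OF assms(1,4,6)])
  finally have "norm v \<le> norm (z - p) / \<beta>"
    using \<open>\<beta> > 0\<close> by (simp add: field_simps)
  have yJ: "norm (y - resolvent A \<gamma> y) \<le> \<gamma> / \<beta> * norm (z - p)"
  proof -
    have "norm (y - resolvent A \<gamma> y) \<le> \<gamma> * norm v"
      by (rule resolvent_residual_le[OF assms(1,5) \<open>v \<in> A y\<close>])
    also have "\<dots> \<le> \<gamma> * (norm (z - p) / \<beta>)"
      using \<open>norm v \<le> norm (z - p) / \<beta>\<close> \<open>\<gamma> > 0\<close> by (intro mult_left_mono) auto
    finally show ?thesis by simp
  qed
  have "norm (w - resolvent A \<gamma> w) = norm ((w - y) + (y - resolvent A \<gamma> y) + (resolvent A \<gamma> y - resolvent A \<gamma> w))"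
    by simp
  also have "\<dots> \<le> norm ((w - y) + (y - resolvent A \<gamma> y)) + norm (resolvent A \<gamma> y - resolvent A \<gamma> w)"
    by (rule norm_triangle_ineq)
  also have "\<dots> \<le> norm (w - y) + norm (y - resolvent A \<gamma> y) + norm (w - y)"
    using norm_triangle_ineq[of "w - y" "y - resolvent A \<gamma> y"]
      resolvent_nonexpansive[OF assms(1,5), of y w] by (simp add: norm_minus_commute)
  finally show ?thesis
    using wy yJ by (smt (verit))
qed
lemma sum_lessThan_le_tail_sum_bound:
  fixes f :: "nat \<Rightarrow> real"
  assumes nonneg: "\<And>i. 0 \<le> f i" and tail: "\<And>n. (\<Sum>i = j + 1..j + n. f i) \<le> c"
  shows "(\<Sum>i<n. f i) \<le> (\<Sum>i = 0..j. f i) + c"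
proof -
  have "(\<Sum>i<n. f i) \<le> (\<Sum>i = 0..j + n. f i)"
    by (intro sum_mono2) (auto simp: nonneg)
  also have "\<dots> = (\<Sum>i = 0..j. f i) + (\<Sum>i = j + 1..j + n. f i)"
    by (rule sum.ub_add_nat) simp
  finally show ?thesis
    using tail[of n] by simp
qed

lemma le_tail_sum_bound:
  fixes f :: "nat \<Rightarrow> real"
  assumes nonneg: "\<And>i. 0 \<le> f i" and tail: "\<And>n. (\<Sum>i = j + 1..j + n. f i) \<le> c" and "j < m"
  shows "f m \<le> c"
proof -
  have "f m \<le> (\<Sum>i = j + 1..j + (m - j). f i)"
    using \<open>j < m\<close> by (intro member_le_sum) (auto simp: nonneg)
  then show ?thesis
    using tail[of "m - j"] by simp
qed

lemma HPPA_rate_arith: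
  fixes cD cE l k :: nat and \<alpha> \<beta> \<gamma> \<epsilon> r\<^sub>0 r :: real
  assumes "cE \<ge> 1" and "0 < \<gamma>" and "\<gamma> \<le> real l" and "0 \<le> \<alpha>"
    and "0 \<le> r\<^sub>0" and "r\<^sub>0 \<le> real cD" and "0 \<le> r" and "r \<le> real cD + real cE"
    and \<alpha>: "\<alpha> \<le> 1 / (real (2 * (2 * cD + cE) * (4 * k + 3 + 1) - 1) + 1)"
    and \<epsilon>: "\<epsilon> \<le> 1 / (real (2 * (4 * k + 3) + 1) + 1)"
    and \<beta>: "real (8 * (cD + cE) * (k + 1) * l - 1) \<le> \<beta>"
  shows "2 * (\<alpha> * (r\<^sub>0 + r) + \<epsilon>) + \<gamma> / \<beta> * r \<le> 1 / (real k + 1)"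
proof -
  define K where "K = real k + 1"
  define D where "D = real cD + real cE"
  have "K > 0" "D \<ge> 1"
    using \<open>cE \<ge> 1\<close> by (simp_all add: K_def D_def)
  have "l \<ge> 1"
    using \<open>0 < \<gamma>\<close> \<open>\<gamma> \<le> real l\<close> by linarith
  have "\<alpha> \<le> 1 / (8 * (real cD + D) * K)"
    using \<alpha> \<open>cE \<ge> 1\<close> by (simp add: K_def D_def of_nat_diff algebra_simps)
  moreover have "r\<^sub>0 + r \<le> real cD + D"
    using \<open>r\<^sub>0 \<le> real cD\<close> \<open>r \<le> real cD + real cE\<close> by (simp add: D_def)
  ultimately have "\<alpha> * (r\<^sub>0 + r) \<le> 1 / (8 * (real cD + D) * K) * (real cD + D)"
    using \<open>0 \<le> \<alpha>\<close> \<open>0 \<le> r\<^sub>0\<close> \<open>0 \<le> r\<close> \<open>D \<ge> 1\<close> \<open>K > 0\<close> by (intro mult_mono) auto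
  also have "\<dots> = 1 / (8 * K)"
    using \<open>D \<ge> 1\<close> \<open>K > 0\<close> by (simp add: divide_simps)
  finally have \<alpha>_term: "\<alpha> * (r\<^sub>0 + r) \<le> 1 / (8 * K)" .
  have \<epsilon>_term: "\<epsilon> \<le> 1 / (8 * K)"
    using \<epsilon> by (simp add: K_def algebra_simps)
  have "D * K * real l \<ge> 1"
    using \<open>D \<ge> 1\<close> \<open>l \<ge> 1\<close> by (simp add: K_def mult_ge1_I)
  moreover have "8 * (cD + cE) * (k + 1) * l \<ge> 1"
    using \<open>cE \<ge> 1\<close> \<open>l \<ge> 1\<close> by (simp add: Suc_le_eq)
  then have "real (8 * (cD + cE) * (k + 1) * l - 1) = 8 * (D * K * real l) - 1"
    by (simp add: of_nat_diff D_def K_def algebra_simps)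
  ultimately have "\<beta> \<ge> 4 * D * K * real l"
    using \<beta> by linarith
  then have "\<gamma> / \<beta> * r \<le> real l / (4 * D * K * real l) * D"
    using \<open>0 < \<gamma>\<close> \<open>\<gamma> \<le> real l\<close> \<open>0 \<le> r\<close> \<open>r \<le> real cD + real cE\<close> \<open>D \<ge> 1\<close> \<open>K > 0\<close> \<open>l \<ge> 1\<close>
    by (intro mult_mono frac_le) (auto simp: D_def)
  also have "\<dots> = 1 / (4 * K)"
    using \<open>D \<ge> 1\<close> \<open>K > 0\<close> \<open>l \<ge> 1\<close> by (simp add: field_simps)
  finally have "\<gamma> / \<beta> * r \<le> 1 / (4 * K)" .
  with \<alpha>_term \<epsilon>_term have "2 * (\<alpha> * (r\<^sub>0 + r) + \<epsilon>) + \<gamma> / \<beta> * r \<le> 2 * (1 / (8 * K) + 1 / (8 * K)) + 1 / (4 * K)"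
    by (intro add_mono mult_left_mono) auto
  also have "\<dots> \<le> 1 / K"
    using \<open>K > 0\<close> by (simp add: field_simps)
  finally show ?thesis
    unfolding K_def .
qed


theorem mainTheorem9:
  fixes A :: "'a::{real_inner, complete_space} \<Rightarrow> 'a set"
    and \<alpha> \<beta> :: "nat \<Rightarrow> real"
    and e x :: "nat \<Rightarrow> 'a"
    and \<gamma> :: real
    and a B E :: "nat \<Rightarrow> nat"
    and cE cD l :: nat
    and p :: 'a
  assumes maxmon: "maximal_monotone A"
    and alpha: "\<And>n. 0 < \<alpha> n \<and> \<alpha> n < 1"
    and beta: "\<And>n. \<beta> n > 0"
    and HPPA: "\<And>n. x (Suc n) = \<alpha> n *\<^sub>R x 0 + (1 - \<alpha> n) *\<^sub>R (resolvent A (\<beta> n) (x n) + e n)"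
    and gamma: "\<gamma> > 0"
    and mono_a: "mono a" and mono_B: "mono B" and mono_E: "mono E"
    and Q1: "\<forall>k. \<forall>n \<ge> a k. \<alpha> n \<le> 1 / (real k + 1)"
    and Q3: "\<forall>k. \<forall>n \<ge> B k. \<beta> n \<ge> real k"
    and Q4: "\<forall>k n. (\<Sum>i = E k + 1..E k + n. norm (e i)) \<le> 1 / (real k + 1)"
    and cE: "real cE \<ge> 1 + (\<Sum>i = 0..E 0. norm (e i))"
    and pS: "p \<in> zeros A"
    and cD: "real cD \<ge> norm (x 0 - p)"
    and l: "real l \<ge> \<gamma>"
  shows "let xi = (\<lambda>k. max (a (2 * (2 * cD + cE) * (k + 1) - 1)) (E (2 * k + 1) + 1));
             chi = (\<lambda>k. max (xi (4 * k + 3)) (B (8 * (cD + cE) * (k + 1) * l - 1)) + 1)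
         in \<forall>k. \<forall>n \<ge> chi k. norm (x n - resolvent A \<gamma> (x n)) \<le> 1 / (real k + 1)"
proof -
  have tail: "\<And>k n. (\<Sum>i = E k + 1..E k + n. norm (e i)) \<le> 1 / (real k + 1)"
    using Q4 by blast
  have "cE \<ge> 1"
    using cE sum_nonneg[of "{0..E 0}" "\<lambda>i. norm (e i)"] by simp
  have bounded: "norm (x m - p) \<le> real cD + real cE" for m
    using HPPA_dist_zero_le[OF maxmon alpha beta HPPA pS, of m] cD cE
      sum_lessThan_le_tail_sum_bound[of "\<lambda>i. norm (e i)", OF _ tail[of 0], of m] by simp
  show ?thesis
    unfolding Let_def
  proof (intro allI impI)
    fix k n
    assume "max (max (a (2 * (2 * cD + cE) * (4 * k + 3 + 1) - 1)) (E (2 * (4 * k + 3) + 1) + 1))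
      (B (8 * (cD + cE) * (k + 1) * l - 1)) + 1 \<le> n"
    then obtain m where n: "n = Suc m" and "a (2 * (2 * cD + cE) * (4 * k + 3 + 1) - 1) \<le> m"
      and "E (2 * (4 * k + 3) + 1) < m" and "B (8 * (cD + cE) * (k + 1) * l - 1) \<le> m"
      by (cases n) auto
    have "norm (x n - resolvent A \<gamma> (x n))
        \<le> 2 * (\<alpha> m * (norm (x 0 - p) + norm (x m - p)) + norm (e m)) + \<gamma> / \<beta> m * norm (x m - p)"
      unfolding n using alpha[of m] by (intro HPPA_step_residual_le[OF maxmon _ _ beta gamma pS HPPA]) auto
    also have "\<dots> \<le> 1 / (real k + 1)"
    proof (rule HPPA_rate_arith)
      show "\<alpha> m \<le> 1 / (real (2 * (2 * cD + cE) * (4 * k + 3 + 1) - 1) + 1)"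
        using Q1 \<open>a (2 * (2 * cD + cE) * (4 * k + 3 + 1) - 1) \<le> m\<close> by blast
      show "norm (e m) \<le> 1 / (real (2 * (4 * k + 3) + 1) + 1)"
        by (rule le_tail_sum_bound[OF _ tail \<open>E (2 * (4 * k + 3) + 1) < m\<close>]) simp
      show "real (8 * (cD + cE) * (k + 1) * l - 1) \<le> \<beta> m"
        using Q3 \<open>B (8 * (cD + cE) * (k + 1) * l - 1) \<le> m\<close> by blast
    qed (use \<open>cE \<ge> 1\<close> gamma l alpha[of m] cD bounded[of m] in auto)
    finally show "norm (x n - resolvent A \<gamma> (x n)) \<le> 1 / (real k + 1)" .
  qed
qed

end
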